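(* Let $G=(V,E,p,(V_{E},V_{O}))$ be a parity game, let $\rho_0,\rho_1,\dots,\rho_t$ be a lifting sequence on $G$, and let $LH$ be the corresponding lifting history graph. If there is a path in $LH$ containing at least one edge from a node $(w,m)$ to a node $(w,m')$ (with the same vertex $w$), then $m>m'$.
   Context: A parity game $G=(V,E,p,(V_{E},V_{O}))$: finite vertex set $V$ partitioned into $V_{E}$ (Even) and $V_{O}$ (Odd), total edge relation $E$, priorities $p:V\to\mathbb{N}$; $\mathrm{post}(v)=\{w:(v,w)\in E\}$, $V_i=\{v:p(v)=i\}$. Let $d$ be one more than the largest priority. $\mathbb{M}$ consists of $\top$ and all tuples $(m_0,\dots,m_{d-1})\in\mathbb{N}^d$ with $m_i=0$ for even $i$ and $m_i\le |V_i|$ for odd $i$, ordered lexicographically with $\top$ above all tuples; $m<_i m'$ compares only positions $0..i$ lexicographically (tuples $<_i\top$, $\top=_i\top$). For $\rho:V\to\mathbb{M}$ and $w\in\mathrm{post}(v)$, $\mathrm{Prog}(\rho,v,w)$ is the least $m\in\mathbb{M}$ with $m\ge_{p(v)}\rho(w)$ if $p(v)$ is even, and with $m>_{p(v)}\rho(w)$ or $m=\rho(w)=\top$ if $p(v)$ is odd. $\mathrm{Lift}(\rho,v)$ is $\rho$ with the value at $v$ replaced by $\max\{\rho(v),\min_{w\in\mathrm{post}(v)}\mathrm{Prog}(\rho,v,w)\}$ if $v\in V_{E}$ and by $\max\{\rho(v),\max_{w\in\mathrm{post}(v)}\mathrm{Prog}(\rho,v,w)\}$ if $v\in V_{O}$.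 A lifting sequence is $\rho_0,\dots,\rho_t$ with $\rho_0$ the constant function $(0,\dots,0)$ and $\rho_{j+1}=\mathrm{Lift}(\rho_j,v_j)\neq\rho_j$ for some vertex $v_j$. The lifting history graph $LH$ of such a sequence has as nodes all pairs $(v,m)\in V\times\mathbb{M}$ such that $\rho_i(v)=m$ for some $i\le t$, and an edge from $(v,m)$ to $(w,m')$ iff $w\in\mathrm{post}(v)$ and there exists $i\le t$ with $m=\rho_i(v)>\rho_{i-1}(v)$ and either $v\ne w$ and $\rho_{i-1}(w)=\rho_i(w)=m'$, or $v=w$ and $\rho_{i-1}(v)=m'$. *)

theory Defs
  imports Main
begin

text \<open>A parity game is given by a finite vertex set V, the Even vertices VE \<subseteq> V
  (the Odd vertices are V - VE), a total edge relation E \<subseteq> V \<times> V and priorities p.\<close>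

definition parity_game :: "'v set \<Rightarrow> 'v set \<Rightarrow> ('v \<times> 'v) set \<Rightarrow> ('v \<Rightarrow> nat) \<Rightarrow> bool" where
  "parity_game V VE E p \<longleftrightarrow> finite V \<and> VE \<subseteq> V \<and> E \<subseteq> V \<times> V \<and> (\<forall>v\<in>V. \<exists>w. (v, w) \<in> E)"

definition post :: "('v \<times> 'v) set \<Rightarrow> 'v \<Rightarrow> 'v set" where
  "post E v = {w. (v, w) \<in> E}"

definition prio_class :: "'v set \<Rightarrow> ('v \<Rightarrow> nat) \<Rightarrow> nat \<Rightarrow> 'v set" where
  "prio_class V p i = {v \<in> V. p v = i}"

definition dim :: "'v set \<Rightarrow> ('v \<Rightarrow> nat) \<Rightarrow> nat" where
  "dim V p = Suc (Max (p ` V))"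

datatype meas = Tup "nat list" | Top

definition lex_less :: "nat list \<Rightarrow> nat list \<Rightarrow> bool" where
  "lex_less xs ys \<longleftrightarrow> (\<exists>k. k < length xs \<and> k < length ys \<and> take k xs = take k ys \<and> xs ! k < ys ! k)"

fun meas_le :: "meas \<Rightarrow> meas \<Rightarrow> bool" where
  "meas_le _ Top = True"
| "meas_le Top (Tup _) = False"
| "meas_le (Tup xs) (Tup ys) = (xs = ys \<or> lex_less xs ys)"

definition meas_lt :: "meas \<Rightarrow> meas \<Rightarrow> bool" where
  "meas_lt m m' \<longleftrightarrow> meas_le m m' \<and> m \<noteq> m'"

fun trunc :: "nat \<Rightarrow> meas \<Rightarrow> meas" where
  "trunc i (Tup xs) = Tup (take (Suc i) xs)"
| "trunc i Top = Top"

definition meas_le_i :: "nat \<Rightarrow> meas \<Rightarrow> meas \<Rightarrow> bool" where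
  "meas_le_i i m m' \<longleftrightarrow> meas_le (trunc i m) (trunc i m')"

definition meas_lt_i :: "nat \<Rightarrow> meas \<Rightarrow> meas \<Rightarrow> bool" where
  "meas_lt_i i m m' \<longleftrightarrow> meas_lt (trunc i m) (trunc i m')"

definition Meas :: "'v set \<Rightarrow> ('v \<Rightarrow> nat) \<Rightarrow> meas set" where
  "Meas V p = {Top} \<union> {Tup xs | xs. length xs = dim V p \<and>
      (\<forall>i < dim V p. (even i \<longrightarrow> xs ! i = 0) \<and> (odd i \<longrightarrow> xs ! i \<le> card (prio_class V p i)))}"

definition zero_meas :: "'v set \<Rightarrow> ('v \<Rightarrow> nat) \<Rightarrow> meas" where
  "zero_meas V p = Tup (replicate (dim V p) 0)"

definition least_meas :: "meas set \<Rightarrow> meas" where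
  "least_meas S = (THE m. m \<in> S \<and> (\<forall>m'\<in>S. meas_le m m'))"

definition greatest_meas :: "meas set \<Rightarrow> meas" where
  "greatest_meas S = (THE m. m \<in> S \<and> (\<forall>m'\<in>S. meas_le m' m))"

definition max_meas :: "meas \<Rightarrow> meas \<Rightarrow> meas" where
  "max_meas a b = (if meas_le a b then b else a)"

definition Prog :: "'v set \<Rightarrow> ('v \<Rightarrow> nat) \<Rightarrow> ('v \<Rightarrow> meas) \<Rightarrow> 'v \<Rightarrow> 'v \<Rightarrow> meas" where
  "Prog V p \<rho> v w =
     (if even (p v) then least_meas {m \<in> Meas V p. meas_le_i (p v) (\<rho> w) m}
      else least_meas {m \<in> Meas V p. meas_lt_i (p v) (\<rho> w) m \<or> (m = \<rho> w \<and> \<rho> w = Top)})"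

definition Lift :: "'v set \<Rightarrow> 'v set \<Rightarrow> ('v \<times> 'v) set \<Rightarrow> ('v \<Rightarrow> nat) \<Rightarrow> ('v \<Rightarrow> meas) \<Rightarrow> 'v \<Rightarrow> ('v \<Rightarrow> meas)" where
  "Lift V VE E p \<rho> v = \<rho>(v := max_meas (\<rho> v)
     (if v \<in> VE then least_meas (Prog V p \<rho> v ` post E v)
      else greatest_meas (Prog V p \<rho> v ` post E v)))"

definition lifting_sequence :: "'v set \<Rightarrow> 'v set \<Rightarrow> ('v \<times> 'v) set \<Rightarrow> ('v \<Rightarrow> nat) \<Rightarrow> (nat \<Rightarrow> 'v \<Rightarrow> meas) \<Rightarrow> nat \<Rightarrow> bool" where
  "lifting_sequence V VE E p \<rho> t \<longleftrightarrow>
     \<rho> 0 = (\<lambda>_. zero_meas V p) \<and>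
     (\<forall>j < t. \<exists>v \<in> V. \<rho> (Suc j) = Lift V VE E p (\<rho> j) v \<and> \<rho> (Suc j) \<noteq> \<rho> j)"

definition LH_nodes :: "'v set \<Rightarrow> (nat \<Rightarrow> 'v \<Rightarrow> meas) \<Rightarrow> nat \<Rightarrow> ('v \<times> meas) set" where
  "LH_nodes V \<rho> t = {(v, m). v \<in> V \<and> (\<exists>i \<le> t. \<rho> i v = m)}"

definition LH_edges :: "('v \<times> 'v) set \<Rightarrow> (nat \<Rightarrow> 'v \<Rightarrow> meas) \<Rightarrow> nat \<Rightarrow> (('v \<times> meas) \<times> ('v \<times> meas)) set" where
  "LH_edges E \<rho> t = {((v, m), (w, m')). w \<in> post E v \<and>
      (\<exists>i. 1 \<le> i \<and> i \<le> t \<and> m = \<rho> i v \<and> meas_lt (\<rho> (i - 1) v) (\<rho> i v) \<and>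
          ((v \<noteq> w \<and> \<rho> (i - 1) w = m' \<and> \<rho> i w = m') \<or> (v = w \<and> \<rho> (i - 1) v = m')))}"

end

theory Submission
  imports Defs
begin

text \<open>Every edge of the lifting history graph points backwards in time: its source value
  was produced by a lift at some step i, and its target value was held at step i - 1.
  Along a path the lifting times therefore strictly decrease, since a value produced by a
  lift at step j is never held before step j (lifting sequences are pointwise monotone).
  Hence the value m' at the end of a path from (w, m) to (w, m') was held by w strictly
  before the lift that produced m, so it lies strictly below m.\<close>

lemma lex_less_trans: "lex_less xs ys \<Longrightarrow> lex_less ys zs \<Longrightarrow> lex_less xs zs"
  unfolding lex_less_def
proof (elim exE conjE)
  fix k1 k2
  assume a: "k1 < length xs" "k1 < length ys" "take k1 xs = take k1 ys" "xs ! k1 < ys ! k1"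
     and b: "k2 < length ys" "k2 < length zs" "take k2 ys = take k2 zs" "ys ! k2 < zs ! k2"
  show "\<exists>k. k < length xs \<and> k < length zs \<and> take k xs = take k zs \<and> xs ! k < zs ! k"
  proof (cases "k1 < k2")
    case True
    have "take k1 ys = take k1 zs" using b(3) True
      by (metis min.strict_order_iff take_take)
    moreover have "ys ! k1 = zs ! k1" using b(3) True
      by (metis nth_take)
    ultimately show ?thesis using a True b(2) by (intro exI[of _ k1]) auto
  next
    case False
    then have "k2 \<le> k1" by simp
    then have "take k2 xs = take k2 ys" using a(3) by (metis min.absorb1 take_take)
    moreover have "xs ! k2 \<le> ys ! k2"
    proof (cases "k2 = k1")
      case True
      then show ?thesis using a by simp
    next
      case False
      then show ?thesis using a(3) \<open>k2 \<le> k1\<close> by (metis le_neq_implies_less nth_take order.refl)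
    qed
    ultimately show ?thesis using a b \<open>k2 \<le> k1\<close> by (intro exI[of _ k2]) auto
  qed
qed

lemma lex_less_irrefl: "\<not> lex_less xs xs"
  unfolding lex_less_def by auto

lemma meas_le_refl: "meas_le a a"
  by (cases a) auto

lemma meas_le_trans: "meas_le a b \<Longrightarrow> meas_le b c \<Longrightarrow> meas_le a c"
  by (cases a; cases b; cases c) (auto dest: lex_less_trans)

lemma meas_le_antisym: "meas_le a b \<Longrightarrow> meas_le b a \<Longrightarrow> a = b"
  by (cases a; cases b) (auto dest: lex_less_trans simp: lex_less_irrefl)

lemma meas_le_lt_trans: "meas_le a b \<Longrightarrow> meas_lt b c \<Longrightarrow> meas_lt a c"
  unfolding meas_lt_def using meas_le_trans meas_le_antisym by metis

lemma meas_le_Lift: "meas_le (\<rho> v) (Lift V VE E p \<rho> u v)"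
  unfolding Lift_def max_meas_def by (auto simp: meas_le_refl)

lemma lifting_sequence_mono:
  assumes "lifting_sequence V VE E p \<rho> t" "k \<le> l" "l \<le> t"
  shows "meas_le (\<rho> k v) (\<rho> l v)"
  using assms(2,3)
proof (induction l rule: dec_induct)
  case base
  show ?case by (rule meas_le_refl)
next
  case (step l)
  have "meas_le (\<rho> l v) (\<rho> (Suc l) v)"
    using assms(1) step.prems meas_le_Lift unfolding lifting_sequence_def by (metis Suc_le_lessD)
  with step show ?case using meas_le_trans by auto
qed

lemma lifting_sequence_lifted_value_not_before:
  assumes "lifting_sequence V VE E p \<rho> t" "meas_lt (\<rho> (j - 1) v) (\<rho> j v)" "j \<le> t"
    and "\<rho> k v = \<rho> j v"
  shows "j \<le> k"
proof (rule ccontr)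
  assume "\<not> j \<le> k"
  then have "meas_le (\<rho> k v) (\<rho> (j - 1) v)"
    using lifting_sequence_mono[OF assms(1)] assms(3) by simp
  then have "meas_lt (\<rho> k v) (\<rho> j v)"
    using assms(2) meas_le_lt_trans by blast
  with assms(4) show False
    unfolding meas_lt_def by simp
qed

lemma LH_edgeE:
  assumes "((v, m), (u, n)) \<in> LH_edges E \<rho> t"
  obtains i where "1 \<le> i" "i \<le> t" "m = \<rho> i v" "meas_lt (\<rho> (i - 1) v) (\<rho> i v)"
    "n = \<rho> (i - 1) u"
  using assms unfolding LH_edges_def by auto

lemma LH_path_backwards_in_time:
  assumes ls: "lifting_sequence V VE E p \<rho> t"
    and "((w, m), (u, n)) \<in> (LH_edges E \<rho> t)\<^sup>+"
  obtains i k where "1 \<le> i" "i \<le> t" "m = \<rho> i w" "meas_lt (\<rho> (i - 1) w) (\<rho> i w)"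
    "1 \<le> k" "k \<le> i" "n = \<rho> (k - 1) u"
  using assms(2)
proof (induction "(u, n)" arbitrary: u n thesis rule: trancl_induct)
  case base
  then show ?case by (metis LH_edgeE order_refl)
next
  case (step y u n)
  obtain x nx where y: "y = (x, nx)" by (cases y)
  obtain i k where path: "1 \<le> i" "i \<le> t" "m = \<rho> i w" "meas_lt (\<rho> (i - 1) w) (\<rho> i w)"
      "k \<le> i" "1 \<le> k" "nx = \<rho> (k - 1) x"
    using step.hyps(3)[OF y] by metis
  obtain j where edge: "1 \<le> j" "j \<le> t" "nx = \<rho> j x" "meas_lt (\<rho> (j - 1) x) (\<rho> j x)"
      "n = \<rho> (j - 1) u"
    using step.hyps(2) y by (auto elim: LH_edgeE)
  have "j \<le> k - 1"
    using lifting_sequence_lifted_value_not_before[OF ls edge(4,2)] path(7) edge(3) by simp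
  then show ?case
    using step.prems path edge by simp
qed

theorem proposition4:
  fixes V VE :: "'v set" and E :: "('v \<times> 'v) set" and p :: "'v \<Rightarrow> nat"
    and \<rho> :: "nat \<Rightarrow> 'v \<Rightarrow> meas" and t :: nat and w :: 'v and m m' :: meas
  assumes "parity_game V VE E p"
    and "lifting_sequence V VE E p \<rho> t"
    and "((w, m), (w, m')) \<in> (LH_edges E \<rho> t)\<^sup>+"
  shows "meas_lt m' m"
proof -
  obtain i k where "i \<le> t" "m = \<rho> i w" "meas_lt (\<rho> (i - 1) w) (\<rho> i w)"
      "k \<le> i" "m' = \<rho> (k - 1) w"
    using LH_path_backwards_in_time[OF assms(2,3)] by metis
  moreover have "meas_le (\<rho> (k - 1) w) (\<rho> (i - 1) w)"
    using lifting_sequence_mono[OF assms(2)] \<open>k \<le> i\<close> \<open>i \<le> t\<close> by simp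
  ultimately show ?thesis
    using meas_le_lt_trans by blast
qed

end
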